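(* Let $\mathcal X,\mathcal Y$ be compact convex sets and $\mathcal L:\mathcal X\times\mathcal Y\to\mathbb R$ a differentiable convex-concave function that is uniformly strongly convex-concave with constants $(\mu_{\mathcal X},\mu_{\mathcal Y})$, $\mu_{\mathcal X},\mu_{\mathcal Y}>0$. Let $(x_c,y_c)$ belong to the relative interior of $\mathcal X\times\mathcal Y$ and define $\delta_x:=\min_{s_x\in\partial\mathcal X}\|s_x-x_c\|>0$ and $\delta_y:=\min_{s_y\in\partial\mathcal Y}\|s_y-y_c\|$. Then $$\mu^{x_c}_{\mathcal L}\ge\mu_{\mathcal X}\delta_x^2\qquad\text{and}\qquad\mu^{y_c}_{\mathcal L}\ge\mu_{\mathcal Y}\delta_y^2.$$
   Context: $\partial$ denotes the relative boundary. Uniformly strongly convex-concave: $\mathcal L(\cdot,y)$ is $\mu_{\mathcal X}$-strongly convex for every $y$ and $-\mathcal L(x,\cdot)$ is $\mu_{\mathcal Y}$-strongly convex for every $x$ (w.r.t. the norms used to define $\delta_x,\delta_y$). Interior strong convexity of a convex differentiable $f$ on a convex set $\mathcal K$ w.r.t. a point $x_c$ in its relative interior: $\mu_f^{x_c}:=\inf\frac2{\gamma^2}(f(u)-f(x)-\langle u-x,\nabla f(x)\rangle)$ over $x\in\mathcal K\setminus\{x_c\}$, $\gamma\in(0,1]$, $u=x+\gamma(s-x)$, where $s$ is the point where the ray from $x$ through $x_c$ meets the relative boundary of $\mathcal K$. Then $\mu^{x_c}_{\mathcal L}:=\inf_{y\in\mathcal Y}\mu^{x_c}_{\mathcal L(\cdot,y)}$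 and $\mu^{y_c}_{\mathcal L}:=\inf_{x\in\mathcal X}\mu^{y_c}_{-\mathcal L(x,\cdot)}$. *)

theory Defs
  imports "HOL-Analysis.Analysis"
begin

definition strongly_convex_on :: "real \<Rightarrow> 'a::real_normed_vector set \<Rightarrow> ('a \<Rightarrow> real) \<Rightarrow> bool" where
  "strongly_convex_on \<mu> K f \<longleftrightarrow>
     (\<forall>x\<in>K. \<forall>y\<in>K. \<forall>t\<in>{0..1}.
        f ((1 - t) *\<^sub>R x + t *\<^sub>R y) \<le> (1 - t) * f x + t * f y - \<mu> / 2 * t * (1 - t) * (norm (x - y))\<^sup>2)"

text \<open>Admissible values in the definition of interior strong convexity of f on K w.r.t. xc:
  x in K minus xc, gamma in (0,1], s the point where the ray from x through xc meets
  the relative boundary of K (s = x + t (xc - x), t >= 1), u = x + gamma (s - x).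
  The linear term uses the Frechet derivative of f at x.\<close>
definition isc_values :: "'a::euclidean_space set \<Rightarrow> 'a \<Rightarrow> ('a \<Rightarrow> real) \<Rightarrow> real set" where
  "isc_values K xc f =
     {2 / \<gamma>\<^sup>2 * (f u - f x - frechet_derivative f (at x) (u - x)) | x \<gamma> t s u.
        x \<in> K - {xc} \<and> 0 < \<gamma> \<and> \<gamma> \<le> 1 \<and> 1 \<le> t \<and>
        s = x + t *\<^sub>R (xc - x) \<and> s \<in> rel_frontier K \<and> u = x + \<gamma> *\<^sub>R (s - x)}"

definition interior_sc :: "'a::euclidean_space set \<Rightarrow> 'a \<Rightarrow> ('a \<Rightarrow> real) \<Rightarrow> real" where
  "interior_sc K xc f = Inf (isc_values K xc f)"

definition interior_sc_L_x :: "'a::euclidean_space set \<Rightarrow> 'b set \<Rightarrow> 'a \<Rightarrow> ('a \<Rightarrow> 'b \<Rightarrow> real) \<Rightarrow> real" where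
  "interior_sc_L_x X Y xc L = Inf ((\<lambda>y. interior_sc X xc (\<lambda>x. L x y)) ` Y)"

definition interior_sc_L_y :: "'a set \<Rightarrow> 'b::euclidean_space set \<Rightarrow> 'b \<Rightarrow> ('a \<Rightarrow> 'b \<Rightarrow> real) \<Rightarrow> real" where
  "interior_sc_L_y X Y yc L = Inf ((\<lambda>x. interior_sc Y yc (\<lambda>y. - L x y)) ` X)"

definition dist_rel_bd :: "'a::euclidean_space set \<Rightarrow> 'a \<Rightarrow> real" where
  "dist_rel_bd K c = Inf ((\<lambda>s. norm (s - c)) ` rel_frontier K)"

end

theory Submission
  imports Defs
begin

text \<open>For a differentiable \<open>\<mu>\<close>-strongly convex \<open>f\<close> the first-order condition
  \<open>f u - f x - Df(x)(u - x) \<ge> \<mu>/2 \<parallel>u - x\<parallel>\<^sup>2\<close> holds. In the quantity defining interior strong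
  convexity, \<open>u - x = \<gamma> (s - x)\<close>, so every admissible value is at least \<open>\<mu> \<parallel>s - x\<parallel>\<^sup>2\<close>; and
  since \<open>x\<^sub>c\<close> lies between \<open>x\<close> and the boundary point \<open>s\<close>, \<open>\<parallel>s - x\<parallel> \<ge> \<parallel>s - x\<^sub>c\<parallel> \<ge> \<delta>\<close>.
  Apply this to every slice \<open>\<L>(\<cdot>, y)\<close> and \<open>-\<L>(x, \<cdot>)\<close>.\<close>

lemma has_real_derivative_along_line:
  assumes "(f has_derivative D) (at x)"
  shows "((\<lambda>\<tau>. f (x + \<tau> *\<^sub>R v)) has_real_derivative D v) (at 0)"
proof -
  have line: "((\<lambda>\<tau>. x + \<tau> *\<^sub>R v) has_derivative (\<lambda>h. h *\<^sub>R v)) (at (0::real))"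
    by (auto intro!: derivative_eq_intros)
  have "(f has_derivative D) (at (x + 0 *\<^sub>R v))"
    using assms by simp
  from diff_chain_at[OF line this]
  have "((\<lambda>\<tau>. f (x + \<tau> *\<^sub>R v)) has_derivative (\<lambda>h. h * D v)) (at 0)"
    using linear_cmul[OF has_derivative_linear[OF assms]] by (simp add: o_def)
  then show ?thesis
    by (simp add: has_field_derivative_def mult.commute[of _ "D v"])
qed

lemma strongly_convex_on_derivative_le:
  assumes sc: "strongly_convex_on \<mu> K f" and "x \<in> K" "u \<in> K"
    and D: "(f has_derivative D) (at x)"
  shows "D (u - x) \<le> f u - f x - \<mu> / 2 * (norm (u - x))\<^sup>2"
proof -
  define v where "v = u - x"
  define q where "q h = (f (x + h *\<^sub>R v) - f x) / h" for h
  have q_lim: "(q \<longlongrightarrow> D v) (at_right 0)"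
    using has_real_derivative_along_line[OF D, of v]
    unfolding DERIV_def q_def by (auto intro: tendsto_mono[OF at_le])
  have bound_lim: "((\<lambda>h. f u - f x - \<mu> / 2 * (1 - h) * (norm v)\<^sup>2)
      \<longlongrightarrow> f u - f x - \<mu> / 2 * (1 - 0) * (norm v)\<^sup>2) (at_right 0)"
    by (intro tendsto_intros)
  have "\<forall>\<^sub>F h in at_right (0::real). h \<in> {0<..<1}"
    by (rule eventually_at_right_real) simp
  then have "\<forall>\<^sub>F h in at_right 0. q h \<le> f u - f x - \<mu> / 2 * (1 - h) * (norm v)\<^sup>2"
  proof eventually_elim
    case (elim h)
    have "f ((1 - h) *\<^sub>R x + h *\<^sub>R u)
        \<le> (1 - h) * f x + h * f u - \<mu> / 2 * h * (1 - h) * (norm (x - u))\<^sup>2"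
      using sc \<open>x \<in> K\<close> \<open>u \<in> K\<close> elim unfolding strongly_convex_on_def by auto
    moreover have "(1 - h) *\<^sub>R x + h *\<^sub>R u = x + h *\<^sub>R v"
      by (simp add: v_def algebra_simps)
    ultimately have "f (x + h *\<^sub>R v) - f x \<le> h * (f u - f x - \<mu> / 2 * (1 - h) * (norm v)\<^sup>2)"
      by (simp add: v_def norm_minus_commute algebra_simps)
    with elim show ?case
      by (simp add: q_def divide_le_eq mult.commute)
  qed
  from tendsto_le[OF trivial_limit_at_right_real bound_lim q_lim this]
  show ?thesis by (simp add: v_def)
qed

lemma dist_rel_bd_nonneg: "rel_frontier K \<noteq> {} \<Longrightarrow> 0 \<le> dist_rel_bd K c"
  unfolding dist_rel_bd_def by (auto intro: cInf_greatest)

lemma dist_rel_bd_le: "s \<in> rel_frontier K \<Longrightarrow> dist_rel_bd K c \<le> norm (s - c)"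
  unfolding dist_rel_bd_def by (rule cInf_lower) (auto intro: bdd_belowI[of _ 0])

lemma norm_beyond_le:
  assumes "1 \<le> t" and "s = x + t *\<^sub>R (c - x)"
  shows "norm (s - c) \<le> norm (s - x)"
proof -
  have "s - c = (t - 1) *\<^sub>R (c - x)"
    using assms by (simp add: algebra_simps)
  then have "norm (s - c) = (t - 1) * norm (c - x)"
    using assms by simp
  also have "\<dots> \<le> t * norm (c - x)"
    by (simp add: algebra_simps)
  also have "\<dots> = norm (s - x)"
    using assms by simp
  finally show ?thesis .
qed

text \<open>Walking from a boundary point \<open>s\<close> through \<open>x\<^sub>c\<close> slightly beyond it stays in \<open>K\<close>; the point \<open>x\<close>
  reached there, with \<open>\<gamma> = 1\<close>, is admissible.\<close>
lemma isc_values_nonempty: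
  assumes "convex K" "closed K" and xc: "xc \<in> rel_interior K"
    and s: "s \<in> rel_frontier K"
  shows "isc_values K xc f \<noteq> {}"
proof -
  have "s \<in> K"
    using s \<open>closed K\<close> by (simp add: rel_frontier_def)
  moreover have "s \<noteq> xc"
    using s xc by (auto simp: rel_frontier_def)
  ultimately obtain e where e: "1 < e" and xK: "(1 - e) *\<^sub>R s + e *\<^sub>R xc \<in> K"
    using convex_rel_interior_iff[OF \<open>convex K\<close>] xc by blast
  define x where "x = (1 - e) *\<^sub>R s + e *\<^sub>R xc"
  define t where "t = e / (e - 1)"
  have xc_x: "xc - x = (e - 1) *\<^sub>R (s - xc)"
    by (simp add: x_def algebra_simps)
  have "x \<in> K - {xc}"
    using xK xc_x e \<open>s \<noteq> xc\<close> by (auto simp: x_def)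
  moreover have "1 \<le> t"
    using e by (simp add: t_def)
  moreover have "t *\<^sub>R (xc - x) = e *\<^sub>R (s - xc)"
    using e by (simp add: xc_x t_def)
  then have "s = x + t *\<^sub>R (xc - x)"
    by (simp add: x_def algebra_simps)
  ultimately have "2 / 1\<^sup>2 * (f (x + 1 *\<^sub>R (s - x)) - f x
      - frechet_derivative f (at x) (x + 1 *\<^sub>R (s - x) - x)) \<in> isc_values K xc f"
    unfolding isc_values_def mem_Collect_eq using s
    by (rule_tac exI[of _ x], rule_tac exI[of _ 1], rule_tac exI[of _ t], rule_tac exI[of _ s]) auto
  then show ?thesis by blast
qed

lemma isc_values_ge:
  assumes "convex K" "closed K" and sc: "strongly_convex_on \<mu> K f" and "0 \<le> \<mu>"
    and diff: "\<forall>x\<in>K. f differentiable (at x)"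
    and r: "r \<in> isc_values K xc f"
  shows "\<mu> * (dist_rel_bd K xc)\<^sup>2 \<le> r"
proof -
  obtain x \<gamma> t s u where r_eq: "r = 2 / \<gamma>\<^sup>2 * (f u - f x - frechet_derivative f (at x) (u - x))"
    and "x \<in> K" "0 < \<gamma>" "\<gamma> \<le> 1" "1 \<le> t" and s_eq: "s = x + t *\<^sub>R (xc - x)"
    and s: "s \<in> rel_frontier K" and u_eq: "u = x + \<gamma> *\<^sub>R (s - x)"
    using r unfolding isc_values_def by blast
  have "s \<in> K"
    using s \<open>closed K\<close> by (simp add: rel_frontier_def)
  have "u = (1 - \<gamma>) *\<^sub>R x + \<gamma> *\<^sub>R s"
    using u_eq by (simp add: algebra_simps)
  then have "u \<in> K"
    using convexD[OF \<open>convex K\<close> \<open>x \<in> K\<close> \<open>s \<in> K\<close>, of "1 - \<gamma>" \<gamma>] \<open>0 < \<gamma>\<close> \<open>\<gamma> \<le> 1\<close> by simp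
  have D: "(f has_derivative frechet_derivative f (at x)) (at x)"
    using diff \<open>x \<in> K\<close> frechet_derivative_works by blast
  have norm_u: "norm (u - x) = \<gamma> * norm (s - x)"
    using u_eq \<open>0 < \<gamma>\<close> by simp
  have "dist_rel_bd K xc \<le> norm (s - x)"
    using dist_rel_bd_le[OF s, of xc] norm_beyond_le[OF \<open>1 \<le> t\<close> s_eq] by linarith
  then have "\<mu> * (dist_rel_bd K xc)\<^sup>2 \<le> \<mu> * (norm (s - x))\<^sup>2"
    using dist_rel_bd_nonneg[of K] s \<open>0 \<le> \<mu>\<close> by (intro mult_left_mono power_mono) auto
  also have "\<dots> = 2 / \<gamma>\<^sup>2 * (\<mu> / 2 * (norm (u - x))\<^sup>2)"
    using norm_u \<open>0 < \<gamma>\<close> by (simp add: field_simps power_mult_distrib)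
  also have "\<dots> \<le> r"
    unfolding r_eq
    using strongly_convex_on_derivative_le[OF sc \<open>x \<in> K\<close> \<open>u \<in> K\<close> D]
    by (intro mult_left_mono) auto
  finally show ?thesis .
qed

lemma interior_sc_ge:
  assumes "convex K" "closed K" "strongly_convex_on \<mu> K f" "0 \<le> \<mu>"
    and "\<forall>x\<in>K. f differentiable (at x)"
    and "xc \<in> rel_interior K" "rel_frontier K \<noteq> {}"
  shows "\<mu> * (dist_rel_bd K xc)\<^sup>2 \<le> interior_sc K xc f"
  unfolding interior_sc_def
  using assms isc_values_nonempty isc_values_ge by (metis cInf_greatest ex_in_conv)

lemma differentiable_at_Pair_left:
  assumes "(\<lambda>p. g (fst p) (snd p)) differentiable (at (x, y))"
  shows "(\<lambda>x. g x y) differentiable (at x)"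
proof -
  have "(\<lambda>x. (x, y)) differentiable (at x)"
    by (auto intro!: derivative_eq_intros simp: differentiable_def)
  moreover have "(\<lambda>p. g (fst p) (snd p)) differentiable (at ((\<lambda>x. (x, y)) x))"
    using assms by simp
  ultimately show ?thesis
    using differentiable_chain_at by (fastforce simp: o_def)
qed

lemma differentiable_at_Pair_right:
  assumes "(\<lambda>p. g (fst p) (snd p)) differentiable (at (x, y))"
  shows "(\<lambda>y. g x y) differentiable (at y)"
proof -
  have "(\<lambda>y. (x, y)) differentiable (at y)"
    by (auto intro!: derivative_eq_intros simp: differentiable_def)
  moreover have "(\<lambda>p. g (fst p) (snd p)) differentiable (at ((\<lambda>y. (x, y)) y))"
    using assms by simp
  ultimately show ?thesis
    using differentiable_chain_at by (fastforce simp: o_def)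
qed

theorem proposition12:
  fixes X :: "'a::euclidean_space set" and Y :: "'b::euclidean_space set"
    and L :: "'a \<Rightarrow> 'b \<Rightarrow> real"
    and \<mu>X \<mu>Y :: real and xc :: 'a and yc :: 'b
  assumes "compact X" "convex X" "compact Y" "convex Y"
    and "\<forall>x\<in>X. \<forall>y\<in>Y. (\<lambda>p. L (fst p) (snd p)) differentiable (at (x, y))"
    and "\<forall>y\<in>Y. convex_on X (\<lambda>x. L x y)"
    and "\<forall>x\<in>X. concave_on Y (\<lambda>y. L x y)"
    and "\<mu>X > 0" "\<mu>Y > 0"
    and "\<forall>y\<in>Y. strongly_convex_on \<mu>X X (\<lambda>x. L x y)"
    and "\<forall>x\<in>X. strongly_convex_on \<mu>Y Y (\<lambda>y. - L x y)"
    and "(xc, yc) \<in> rel_interior (X \<times> Y)"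
    and "rel_frontier X \<noteq> {}" "rel_frontier Y \<noteq> {}"
  shows "interior_sc_L_x X Y xc L \<ge> \<mu>X * (dist_rel_bd X xc)\<^sup>2
       \<and> interior_sc_L_y X Y yc L \<ge> \<mu>Y * (dist_rel_bd Y yc)\<^sup>2"
proof -
  have ri: "xc \<in> rel_interior X" "yc \<in> rel_interior Y"
    using assms(12) rel_interior_Times[OF assms(2,4)] by auto
  then have "X \<noteq> {}" "Y \<noteq> {}"
    using rel_interior_subset by auto
  have "0 \<le> \<mu>X" "0 \<le> \<mu>Y"
    using assms(8,9) by simp_all
  have diff_x: "(\<lambda>x. L x y) differentiable (at x)" if "x \<in> X" "y \<in> Y" for x y
    using assms(5) that by (blast intro: differentiable_at_Pair_left)
  have diff_y: "(\<lambda>y. - L x y) differentiable (at y)" if "x \<in> X" "y \<in> Y" for x y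
    using assms(5) that by (blast intro: differentiable_at_Pair_right differentiable_minus)
  have "\<mu>X * (dist_rel_bd X xc)\<^sup>2 \<le> interior_sc_L_x X Y xc L"
    unfolding interior_sc_L_x_def using \<open>Y \<noteq> {}\<close> assms(10)
    by (intro cInf_greatest) (auto intro!: interior_sc_ge compact_imp_closed assms diff_x ri \<open>0 \<le> \<mu>X\<close>)
  moreover have "\<mu>Y * (dist_rel_bd Y yc)\<^sup>2 \<le> interior_sc_L_y X Y yc L"
    unfolding interior_sc_L_y_def using \<open>X \<noteq> {}\<close> assms(11)
    by (intro cInf_greatest) (auto intro!: interior_sc_ge compact_imp_closed assms diff_y ri \<open>0 \<le> \<mu>Y\<close>)
  ultimately show ?thesis by simp
qed

end
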